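(* Let $R$ be a $\sigma$-(sps) Armendariz ring, where $\sigma$ is an endomorphism of $R$. The following are equivalent: (1) $R$ is reversible; (2) $R$ is $\sigma$-reversible; (3) $R$ is right $\sigma$-reversible; (4) $R[[x;\sigma]]$ is reversible. Likewise, the following are equivalent: (1') $R$ is symmetric; (2') $R$ is $\sigma$-symmetric; (3') $R$ is right $\sigma$-symmetric; (4') $R[[x;\sigma]]$ is symmetric.
   Context: All rings are associative with identity; $\sigma$ denotes a nonzero, non-identity ring endomorphism of $R$. The skew power series ring $R[[x;\sigma]]$ consists of all formal series $\sum_{i=0}^\infty a_i x^i$ with $a_i\in R$, added termwise and multiplied using distributivity and the rule $xa=\sigma(a)x$ for $a\in R$. A ring $R$ is $\sigma$-(sps) Armendariz if whenever $p=\sum_{i=0}^\infty a_ix^i$ and $q=\sum_{j=0}^\infty b_jx^j$ in $R[[x;\sigma]]$ satisfy $pq=0$, then $a_ib_j=0$ for all $i,j$. A ring $S$ is reversible if $ab=0$ implies $ba=0$; symmetric if $abc=0$ implies $acb=0$. $R$ is right $\sigma$-reversible if $ab=0$ implies $b\sigma(a)=0$ for $a,b\in R$; left $\sigma$-reversible if $ab=0$ implies $\sigma(b)a=0$; $\sigma$-reversible if both. $R$ is right $\sigma$-symmetric if $abc=0$ implies $ac\sigma(b)=0$ for $a,b,c\in R$; left $\sigma$-symmetric if $abc=0$ implies $\sigma(b)ac=0$; $\sigma$-symmetric if both. *)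

theory Defs
  imports Main
begin

definition ring_endo :: "('a::ring_1 \<Rightarrow> 'a) \<Rightarrow> bool" where
  "ring_endo \<sigma> \<longleftrightarrow> (\<forall>a b. \<sigma> (a + b) = \<sigma> a + \<sigma> b) \<and>
                     (\<forall>a b. \<sigma> (a * b) = \<sigma> a * \<sigma> b) \<and> \<sigma> 1 = 1"

text \<open>Skew power series ring R[[x;sigma]]: a series sum a_i x^i is its coefficient
  sequence nat => R; addition is termwise, zero is the zero sequence, and
  multiplication follows from x a = sigma(a) x, i.e.
  (sum a_i x^i)(sum b_j x^j) = sum_n (sum_{i+j=n} a_i sigma^i(b_j)) x^n.\<close>
definition sps_zero :: "nat \<Rightarrow> 'a::ring_1" where
  "sps_zero = (\<lambda>_. 0)"

definition sps_mult :: "('a::ring_1 \<Rightarrow> 'a) \<Rightarrow> (nat \<Rightarrow> 'a) \<Rightarrow> (nat \<Rightarrow> 'a) \<Rightarrow> (nat \<Rightarrow> 'a)" where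
  "sps_mult \<sigma> p q = (\<lambda>n. \<Sum>i\<le>n. p i * (\<sigma> ^^ i) (q (n - i)))"

definition sps_armendariz :: "('a::ring_1 \<Rightarrow> 'a) \<Rightarrow> bool" where
  "sps_armendariz \<sigma> \<longleftrightarrow>
     (\<forall>p q. sps_mult \<sigma> p q = sps_zero \<longrightarrow> (\<forall>i j. p i * q j = 0))"

definition reversible :: "'a::ring_1 itself \<Rightarrow> bool" where
  "reversible _ \<longleftrightarrow> (\<forall>a b::'a. a * b = 0 \<longrightarrow> b * a = 0)"

definition symmetric_ring :: "'a::ring_1 itself \<Rightarrow> bool" where
  "symmetric_ring _ \<longleftrightarrow> (\<forall>a b c::'a. a * b * c = 0 \<longrightarrow> a * c * b = 0)"

definition right_sigma_reversible :: "('a::ring_1 \<Rightarrow> 'a) \<Rightarrow> bool" where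
  "right_sigma_reversible \<sigma> \<longleftrightarrow> (\<forall>a b. a * b = 0 \<longrightarrow> b * \<sigma> a = 0)"

definition left_sigma_reversible :: "('a::ring_1 \<Rightarrow> 'a) \<Rightarrow> bool" where
  "left_sigma_reversible \<sigma> \<longleftrightarrow> (\<forall>a b. a * b = 0 \<longrightarrow> \<sigma> b * a = 0)"

definition sigma_reversible :: "('a::ring_1 \<Rightarrow> 'a) \<Rightarrow> bool" where
  "sigma_reversible \<sigma> \<longleftrightarrow> right_sigma_reversible \<sigma> \<and> left_sigma_reversible \<sigma>"

definition right_sigma_symmetric :: "('a::ring_1 \<Rightarrow> 'a) \<Rightarrow> bool" where
  "right_sigma_symmetric \<sigma> \<longleftrightarrow> (\<forall>a b c. a * b * c = 0 \<longrightarrow> a * c * \<sigma> b = 0)"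

definition left_sigma_symmetric :: "('a::ring_1 \<Rightarrow> 'a) \<Rightarrow> bool" where
  "left_sigma_symmetric \<sigma> \<longleftrightarrow> (\<forall>a b c. a * b * c = 0 \<longrightarrow> \<sigma> b * a * c = 0)"

definition sigma_symmetric :: "('a::ring_1 \<Rightarrow> 'a) \<Rightarrow> bool" where
  "sigma_symmetric \<sigma> \<longleftrightarrow> right_sigma_symmetric \<sigma> \<and> left_sigma_symmetric \<sigma>"

definition sps_reversible :: "('a::ring_1 \<Rightarrow> 'a) \<Rightarrow> bool" where
  "sps_reversible \<sigma> \<longleftrightarrow>
     (\<forall>p q. sps_mult \<sigma> p q = sps_zero \<longrightarrow> sps_mult \<sigma> q p = sps_zero)"

definition sps_symmetric :: "('a::ring_1 \<Rightarrow> 'a) \<Rightarrow> bool" where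
  "sps_symmetric \<sigma> \<longleftrightarrow>
     (\<forall>p q r. sps_mult \<sigma> (sps_mult \<sigma> p q) r = sps_zero \<longrightarrow>
              sps_mult \<sigma> (sps_mult \<sigma> p r) q = sps_zero)"

end

theory Submission
  imports Defs
begin

(* The key consequence of the sps-Armendariz property is that
   sigma is "compatible": a * b = 0 iff a * sigma(b) = 0, obtained by applying
   the Armendariz condition to two well-chosen products of series that vanish.
   Iterating, a * b = 0 iff a * sigma^k(b) = 0 for every k.
   With compatibility, the sigma-twisted reversibility/symmetry conditions are
   equivalent to the plain ones.  For the series ring: a vanishing product of
   series has all coefficient products zero (Armendariz), and in a reversible
   (resp. symmetric) ring these can be reordered and twisted by powers of sigma,
   which kills every coefficient of the reordered product.  Conversely constant
   series embed R multiplicatively into R[[x;sigma]], so reversibility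
   (symmetry) of R[[x;sigma]] restricts to R. *)

lemma sum_atMost_only_first:
  fixes f :: "nat \<Rightarrow> 'a::comm_monoid_add"
  assumes "\<And>i. i \<ge> 1 \<Longrightarrow> f i = 0"
  shows "(\<Sum>i\<le>m. f i) = f 0"
proof -
  have "(\<Sum>i\<le>m. f i) = f 0 + (\<Sum>i<m. f (Suc i))" by (rule sum.atMost_shift)
  also have "(\<Sum>i<m. f (Suc i)) = 0" using assms by simp
  finally show ?thesis by simp
qed

lemma sum_atMost_only_first_two:
  fixes f :: "nat \<Rightarrow> 'a::comm_monoid_add"
  assumes "\<And>i. i \<ge> 2 \<Longrightarrow> f i = 0"
  shows "(\<Sum>i\<le>Suc m. f i) = f 0 + f 1"
proof -
  have "(\<Sum>i\<le>Suc m. f i) = f 0 + (\<Sum>i\<le>m. f (Suc i))" by (rule sum.atMost_Suc_shift)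
  also have "(\<Sum>i\<le>m. f (Suc i)) = f (Suc 0) + (\<Sum>i<m. f (Suc (Suc i)))" by (rule sum.atMost_shift)
  also have "(\<Sum>i<m. f (Suc (Suc i))) = 0" using assms by simp
  finally show ?thesis by simp
qed

lemma sps_zero_iff: "p = sps_zero \<longleftrightarrow> (\<forall>n. p n = 0)"
  by (auto simp: sps_zero_def)

lemma sps_armendariz_coeffs:
  assumes "sps_armendariz \<sigma>" and "sps_mult \<sigma> p q = sps_zero"
  shows "p i * q j = 0"
  using assms unfolding sps_armendariz_def by blast

definition sps_const :: "'a::ring_1 \<Rightarrow> nat \<Rightarrow> 'a" where
  "sps_const c = (\<lambda>n. if n = 0 then c else 0)"

lemma sps_mult_const_left: "sps_mult \<sigma> (sps_const a) q = (\<lambda>n. a * q n)"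
proof
  fix n
  show "sps_mult \<sigma> (sps_const a) q n = a * q n"
    unfolding sps_mult_def by (subst sum_atMost_only_first) (auto simp: sps_const_def)
qed

lemma sps_mult_const: "sps_mult \<sigma> (sps_const a) (sps_const b) = sps_const (a * b)"
  unfolding sps_mult_const_left by (auto simp: sps_const_def)

lemma sps_const_eq_zero: "sps_const c = sps_zero \<longleftrightarrow> c = 0"
  by (auto simp: sps_const_def sps_zero_def fun_eq_iff)

lemma sps_mult_scale_left:
  "sps_mult \<sigma> (\<lambda>i. c * p i) q = (\<lambda>n. c * sps_mult \<sigma> p q n)"
  by (simp add: sps_mult_def sum_distrib_left mult.assoc)

section \<open>Compatibility of sigma\<close>

definition sigma_compatible :: "('a::ring_1 \<Rightarrow> 'a) \<Rightarrow> bool" where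
  "sigma_compatible \<sigma> \<longleftrightarrow> (\<forall>a b. a * b = 0 \<longleftrightarrow> a * \<sigma> b = 0)"

lemma additive_map_zero:
  fixes \<sigma> :: "'a::ring_1 \<Rightarrow> 'a"
  assumes "\<And>a b. \<sigma> (a + b) = \<sigma> a + \<sigma> b"
  shows "\<sigma> 0 = 0"
  using assms[of 0 0] by simp

text \<open>If a * b = 0, the series (a + a x) times (sum (-sigma)^n(b) x^n)
  telescopes to zero, so Armendariz gives a * (-sigma(b)) = 0.\<close>

lemma sps_armendariz_zero_mult_sigma:
  fixes \<sigma> :: "'a::ring_1 \<Rightarrow> 'a"
  assumes arm: "sps_armendariz \<sigma>" and ab: "a * b = 0"
  shows "a * \<sigma> b = 0"
proof -
  define p :: "nat \<Rightarrow> 'a" where "p = (\<lambda>i. if i \<le> 1 then a else 0)"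
  define q :: "nat \<Rightarrow> 'a" where "q = (\<lambda>n. ((\<lambda>x. - \<sigma> x) ^^ n) b)"
  have q_Suc: "q (Suc n) = - \<sigma> (q n)" for n by (simp add: q_def)
  have "sps_mult \<sigma> p q n = 0" for n
  proof (cases n)
    case 0 thus ?thesis by (simp add: sps_mult_def p_def q_def ab)
  next
    case (Suc m)
    have "sps_mult \<sigma> p q n = p 0 * q (Suc m) + p 1 * \<sigma> (q m)"
      unfolding sps_mult_def Suc
      by (subst sum_atMost_only_first_two) (simp_all add: p_def)
    also have "\<dots> = 0" by (simp add: p_def q_Suc)
    finally show ?thesis .
  qed
  then have "p 0 * q 1 = 0"
    using sps_armendariz_coeffs[OF arm] by (simp add: sps_zero_iff)
  thus ?thesis by (simp add: p_def q_def)
qed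

text \<open>If a * sigma(b) = 0, then (a x) * b = a sigma(b) x = 0, so a * b = 0.\<close>

lemma sps_armendariz_zero_mult_sigma_rev:
  fixes \<sigma> :: "'a::ring_1 \<Rightarrow> 'a"
  assumes e: "ring_endo \<sigma>" and arm: "sps_armendariz \<sigma>" and ab: "a * \<sigma> b = 0"
  shows "a * b = 0"
proof -
  define p :: "nat \<Rightarrow> 'a" where "p = (\<lambda>i. if i = 1 then a else 0)"
  have \<sigma>0: "\<sigma> 0 = 0"
    using e by (intro additive_map_zero) (simp add: ring_endo_def)
  have "sps_mult \<sigma> p (sps_const b) n = 0" for n
  proof (cases n)
    case 0 thus ?thesis by (simp add: sps_mult_def p_def)
  next
    case (Suc m)
    have "sps_mult \<sigma> p (sps_const b) n = p 0 * sps_const b (Suc m) + p 1 * \<sigma> (sps_const b m)"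
      unfolding sps_mult_def Suc
      by (subst sum_atMost_only_first_two) (simp_all add: p_def)
    also have "\<dots> = 0" using ab \<sigma>0 by (simp add: p_def sps_const_def)
    finally show ?thesis .
  qed
  then have "p 1 * sps_const b 0 = 0"
    using sps_armendariz_coeffs[OF arm] by (simp add: sps_zero_iff)
  thus ?thesis by (simp add: p_def sps_const_def)
qed

lemma sps_armendariz_compatible:
  assumes "ring_endo \<sigma>" and "sps_armendariz \<sigma>"
  shows "sigma_compatible \<sigma>"
  using sps_armendariz_zero_mult_sigma[OF assms(2)]
    sps_armendariz_zero_mult_sigma_rev[OF assms]
  unfolding sigma_compatible_def by blast

lemma compatible_zero_mult:
  assumes "sigma_compatible \<sigma>"
  shows "a * \<sigma> b = 0 \<longleftrightarrow> a * b = 0"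
  using assms unfolding sigma_compatible_def by blast

lemma compatible_zero_mult_iter:
  assumes "sigma_compatible \<sigma>" and "a * b = 0"
  shows "a * (\<sigma> ^^ k) b = 0"
  using assms by (induction k) (auto simp: compatible_zero_mult)

lemma sps_mult_eq_zero_if_coeffs:
  assumes "\<And>i j k. p i * (\<sigma> ^^ k) (q j) = 0"
  shows "sps_mult \<sigma> p q = sps_zero"
  using assms by (simp add: sps_mult_def sps_zero_def)

section \<open>Reversibility\<close>

lemma reversible_iff: "reversible TYPE('a::ring_1) \<longleftrightarrow> (\<forall>a b::'a. a * b = 0 \<longrightarrow> b * a = 0)"
  by (simp add: reversible_def)

lemma compatible_reversible_iff_right_sigma:
  assumes "sigma_compatible \<sigma>"
  shows "reversible TYPE('a::ring_1) \<longleftrightarrow> right_sigma_reversible (\<sigma> :: 'a \<Rightarrow> 'a)"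
  using compatible_zero_mult[OF assms]
  unfolding reversible_def right_sigma_reversible_def by blast

lemma compatible_reversible_left_sigma:
  assumes "sigma_compatible \<sigma>" and "reversible TYPE('a::ring_1)"
  shows "left_sigma_reversible (\<sigma> :: 'a \<Rightarrow> 'a)"
  using assms compatible_zero_mult[OF assms(1)]
  unfolding reversible_def left_sigma_reversible_def by blast

lemma compatible_reversible_iff_sigma:
  assumes "sigma_compatible \<sigma>"
  shows "reversible TYPE('a::ring_1) \<longleftrightarrow> sigma_reversible (\<sigma> :: 'a \<Rightarrow> 'a)"
  using compatible_reversible_iff_right_sigma[OF assms]
    compatible_reversible_left_sigma[OF assms]
  unfolding sigma_reversible_def by blast

text \<open>Reversibility of R[[x;sigma]] restricts to the constants; no hypothesis
  on sigma is needed.\<close>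

lemma sps_reversible_imp_reversible:
  assumes "sps_reversible (\<sigma> :: 'a::ring_1 \<Rightarrow> 'a)"
  shows "reversible TYPE('a)"
  unfolding reversible_iff
proof (intro allI impI)
  fix a b :: 'a assume "a * b = 0"
  then have "sps_mult \<sigma> (sps_const a) (sps_const b) = sps_zero"
    by (simp add: sps_mult_const sps_const_eq_zero)
  then have "sps_mult \<sigma> (sps_const b) (sps_const a) = sps_zero"
    using assms by (simp add: sps_reversible_def)
  thus "b * a = 0" by (simp add: sps_mult_const sps_const_eq_zero)
qed

lemma armendariz_reversible_imp_sps_reversible:
  assumes arm: "sps_armendariz \<sigma>" and comp: "sigma_compatible \<sigma>"
    and rev: "reversible TYPE('a::ring_1)"
  shows "sps_reversible (\<sigma> :: 'a \<Rightarrow> 'a)"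
  unfolding sps_reversible_def
proof (intro allI impI)
  fix p q :: "nat \<Rightarrow> 'a" assume "sps_mult \<sigma> p q = sps_zero"
  then have "q j * p i = 0" for i j
    using sps_armendariz_coeffs[OF arm] rev by (simp add: reversible_iff)
  then show "sps_mult \<sigma> q p = sps_zero"
    by (intro sps_mult_eq_zero_if_coeffs compatible_zero_mult_iter[OF comp])
qed

section \<open>Symmetry\<close>

text \<open>In a symmetric ring one may swap the last two factors of a zero triple
  product; taking the first factor to be 1 gives reversibility.\<close>

lemma symmetric_swap:
  assumes "symmetric_ring TYPE('a::ring_1)" and "a * b * c = 0"
  shows "a * c * b = (0::'a)"
  using assms unfolding symmetric_ring_def by blast

lemma symmetric_imp_reversible:
  assumes "symmetric_ring TYPE('a::ring_1)"
  shows "reversible TYPE('a)"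
  unfolding reversible_iff using symmetric_swap[OF assms, of 1] by simp

lemma symmetric_rotate:
  assumes "symmetric_ring TYPE('a::ring_1)" and "a * b * c = 0"
  shows "b * c * a = (0::'a)"
  using symmetric_imp_reversible[OF assms(1)] assms(2)
  unfolding reversible_iff by (metis mult.assoc)

lemma compatible_symmetric_iff_right_sigma:
  assumes "sigma_compatible \<sigma>"
  shows "symmetric_ring TYPE('a::ring_1) \<longleftrightarrow> right_sigma_symmetric (\<sigma> :: 'a \<Rightarrow> 'a)"
  using compatible_zero_mult[OF assms]
  unfolding symmetric_ring_def right_sigma_symmetric_def by (metis mult.assoc)

lemma compatible_symmetric_left_sigma:
  assumes comp: "sigma_compatible \<sigma>" and sym: "symmetric_ring TYPE('a::ring_1)"
  shows "left_sigma_symmetric (\<sigma> :: 'a \<Rightarrow> 'a)"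
  unfolding left_sigma_symmetric_def
proof (intro allI impI)
  fix a b c :: 'a assume "a * b * c = 0"
  then have "a * c * b = 0" by (rule symmetric_swap[OF sym])
  then have "a * c * \<sigma> b = 0" using comp by (simp add: compatible_zero_mult)
  thus "\<sigma> b * a * c = 0" by (rule symmetric_rotate[OF sym, THEN symmetric_rotate[OF sym]])
qed

lemma compatible_symmetric_iff_sigma:
  assumes "sigma_compatible \<sigma>"
  shows "symmetric_ring TYPE('a::ring_1) \<longleftrightarrow> sigma_symmetric (\<sigma> :: 'a \<Rightarrow> 'a)"
  using compatible_symmetric_iff_right_sigma[OF assms]
    compatible_symmetric_left_sigma[OF assms]
  unfolding sigma_symmetric_def by blast

lemma sps_symmetric_imp_symmetric:
  assumes "sps_symmetric (\<sigma> :: 'a::ring_1 \<Rightarrow> 'a)"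
  shows "symmetric_ring TYPE('a)"
  unfolding symmetric_ring_def
proof (intro allI impI)
  fix a b c :: 'a assume "a * b * c = 0"
  then have "sps_mult \<sigma> (sps_mult \<sigma> (sps_const a) (sps_const b)) (sps_const c) = sps_zero"
    by (simp add: sps_mult_const sps_const_eq_zero)
  then have "sps_mult \<sigma> (sps_mult \<sigma> (sps_const a) (sps_const c)) (sps_const b) = sps_zero"
    using assms by (simp add: sps_symmetric_def)
  thus "a * c * b = 0" by (simp add: sps_mult_const sps_const_eq_zero)
qed

text \<open>If (p q) r = 0 then, by Armendariz and reversibility, r_j (p q) = 0 as a
  series, i.e. (r_j p) q = 0, and a second use of Armendariz gives the
  triple coefficient products r_j p_i q_k = 0.\<close>

lemma armendariz_symmetric_triple_coeffs:
  assumes arm: "sps_armendariz \<sigma>" and sym: "symmetric_ring TYPE('a::ring_1)"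
    and pqr: "sps_mult \<sigma> (sps_mult \<sigma> p q) r = sps_zero"
  shows "r j * p i * q k = (0::'a)"
proof -
  have "r j * sps_mult \<sigma> p q n = 0" for n
    using sps_armendariz_coeffs[OF arm pqr] symmetric_imp_reversible[OF sym]
    by (simp add: reversible_iff)
  then have "sps_mult \<sigma> (\<lambda>i. r j * p i) q = sps_zero"
    by (simp add: sps_mult_scale_left sps_zero_iff)
  thus ?thesis by (rule sps_armendariz_coeffs[OF arm])
qed

text \<open>Every coefficient of (p r) q is a sum of products p_l sigma^m(r_j) sigma^k(q_i),
  each of which vanishes by permuting and twisting the triple r_j p_l q_i.\<close>

lemma armendariz_symmetric_imp_sps_symmetric:
  assumes arm: "sps_armendariz \<sigma>" and comp: "sigma_compatible \<sigma>"
    and sym: "symmetric_ring TYPE('a::ring_1)"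
  shows "sps_symmetric (\<sigma> :: 'a \<Rightarrow> 'a)"
  unfolding sps_symmetric_def
proof (intro allI impI)
  fix p q r :: "nat \<Rightarrow> 'a"
  assume pqr: "sps_mult \<sigma> (sps_mult \<sigma> p q) r = sps_zero"
  note swap = symmetric_swap[OF sym] and twist = compatible_zero_mult_iter[OF comp]
  have twisted: "p l * (\<sigma> ^^ m) (r j) * (\<sigma> ^^ k) (q i) = 0" for l m j k i
  proof -
    have "p l * q i * r j = 0"
      using armendariz_symmetric_triple_coeffs[OF arm sym pqr] by (rule symmetric_rotate[OF sym])
    then have "p l * r j * (\<sigma> ^^ k) (q i) = 0" using swap twist by blast
    then have "p l * (\<sigma> ^^ k) (q i) * (\<sigma> ^^ m) (r j) = 0" using swap twist by blast
    thus ?thesis by (rule swap)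
  qed
  show "sps_mult \<sigma> (sps_mult \<sigma> p r) q = sps_zero"
    by (simp add: sps_mult_def sps_zero_def sum_distrib_right twisted)
qed

theorem theorem2p7:
  fixes \<sigma> :: "'a::ring_1 \<Rightarrow> 'a"
  assumes "ring_endo \<sigma>"
    and "\<sigma> \<noteq> (\<lambda>_. 0)"
    and "\<sigma> \<noteq> id"
    and "sps_armendariz \<sigma>"
  shows "(reversible TYPE('a) \<longleftrightarrow> sigma_reversible \<sigma>) \<and>
         (reversible TYPE('a) \<longleftrightarrow> right_sigma_reversible \<sigma>) \<and>
         (reversible TYPE('a) \<longleftrightarrow> sps_reversible \<sigma>) \<and>
         (symmetric_ring TYPE('a) \<longleftrightarrow> sigma_symmetric \<sigma>) \<and>
         (symmetric_ring TYPE('a) \<longleftrightarrow> right_sigma_symmetric \<sigma>) \<and>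
         (symmetric_ring TYPE('a) \<longleftrightarrow> sps_symmetric \<sigma>)"
proof -
  have comp: "sigma_compatible \<sigma>"
    using assms(1,4) by (rule sps_armendariz_compatible)
  have "reversible TYPE('a) \<longleftrightarrow> sps_reversible \<sigma>"
    using armendariz_reversible_imp_sps_reversible[OF assms(4) comp]
      sps_reversible_imp_reversible by blast
  moreover have "symmetric_ring TYPE('a) \<longleftrightarrow> sps_symmetric \<sigma>"
    using armendariz_symmetric_imp_sps_symmetric[OF assms(4) comp]
      sps_symmetric_imp_symmetric by blast
  ultimately show ?thesis
    using compatible_reversible_iff_sigma[OF comp] compatible_reversible_iff_right_sigma[OF comp]
      compatible_symmetric_iff_sigma[OF comp] compatible_symmetric_iff_right_sigma[OF comp]
    by blast
qed

end
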